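(* Let $h,n\geq2$ and let $F$ be a social preference function. Then: (i) $G(F)$ is a subgroup of $G$; (ii) $G_1(F)$ and $G_2(F)$ are subgroups of $G(F)$, with $G_1(F)\leq S_h\times\{id\}$ and $G_2(F)\leq\{id\}\times S_n$; (iii) $\langle G_1(F),G_2(F)\rangle=G_1(F)\times G_2(F)\leq G(F)$, and there exist a pair $(h,n)$ and a social preference function $F$ for which this inclusion is strict; (iv) $G(F)=G_1(F)\times G_2(F)$ if and only if $G(F)=\pi_1(G(F))\times\pi_2(G(F))$, where $\pi_1,\pi_2$ are the projections of $G$ onto $S_h$ and $S_n$; (v) if $G(F)\leq S_h\times\{id\}$ then $G(F)=G_1(F)$, and if $G(F)\leq\{id\}\times S_n$ then $G(F)=G_2(F)$.
   Context: Permutations compose as $(\sigma\tau)(x)=\sigma(\tau(x))$. Let $G=S_h\times S_n$ and $\mathcal{P}=(S_n)^h$ (preference profiles), with $G$ acting by $(p^{(\varphi,\psi)})_i=\psi\,p_{\varphi^{-1}(i)}$. A social preference function is any $F:\mathcal{P}\to S_n$. Its symmetry group is $G(F)=\{(\varphi,\psi)\in G: F(p^{(\varphi,\psi)})=\psi F(p)\ \forall p\in\mathcal{P}\}$, its anonymity group is $G_1(F)=\{(\varphi,id)\in G: F(p^{(\varphi,id)})=F(p)\ \forall p\}$ and its neutrality group is $G_2(F)=\{(id,\psi)\in G: F(p^{(id,\psi)})=\psi F(p)\ \forall p\}$. *)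

theory Defs
  imports "HOL-Algebra.Algebra"
begin

definition GG :: "nat \<Rightarrow> nat \<Rightarrow> ((nat \<Rightarrow> nat) \<times> (nat \<Rightarrow> nat)) monoid" where
  "GG h n = DirProd (sym_group h) (sym_group n)"

definition profiles :: "nat \<Rightarrow> nat \<Rightarrow> (nat \<Rightarrow> (nat \<Rightarrow> nat)) set" where
  "profiles h n = {1..h} \<rightarrow>\<^sub>E carrier (sym_group n)"

definition act :: "nat \<Rightarrow> (nat \<Rightarrow> nat) \<times> (nat \<Rightarrow> nat) \<Rightarrow> (nat \<Rightarrow> (nat \<Rightarrow> nat)) \<Rightarrow> (nat \<Rightarrow> (nat \<Rightarrow> nat))" where
  "act h g p = (\<lambda>i\<in>{1..h}. snd g \<circ> p (inv_into UNIV (fst g) i))"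

definition spf :: "nat \<Rightarrow> nat \<Rightarrow> ((nat \<Rightarrow> (nat \<Rightarrow> nat)) \<Rightarrow> (nat \<Rightarrow> nat)) \<Rightarrow> bool" where
  "spf h n F \<longleftrightarrow> F \<in> profiles h n \<rightarrow> carrier (sym_group n)"

definition symG where
  "symG h n F = {(\<phi>, \<psi>) \<in> carrier (GG h n).
      \<forall>p\<in>profiles h n. F (act h (\<phi>, \<psi>) p) = \<psi> \<circ> F p}"

definition anonG where
  "anonG h n F = {(\<phi>, \<psi>) \<in> carrier (GG h n). \<psi> = id \<and>
      (\<forall>p\<in>profiles h n. F (act h (\<phi>, id) p) = F p)}"

definition neutG where
  "neutG h n F = {(\<phi>, \<psi>) \<in> carrier (GG h n). \<phi> = id \<and>
      (\<forall>p\<in>profiles h n. F (act h (id, \<psi>) p) = \<psi> \<circ> F p)}"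

end

theory Submission
  imports Defs
begin

text \<open>The action of \<open>G\<close> on profiles is a group action, and \<open>G(F)\<close> is exactly the set of
  \<open>g\<close> for which \<open>F\<close> is equivariant, so it is a subgroup. \<open>G\<^sub>1(F)\<close> and \<open>G\<^sub>2(F)\<close> are its
  intersections with the factors \<open>S\<^sub>h \<times> {id}\<close> and \<open>{id} \<times> S\<^sub>n\<close>; these factors commute
  elementwise, so the product \<open>G\<^sub>1(F) G\<^sub>2(F)\<close> is a subgroup and equals the join. An element
  \<open>(\<phi>, \<psi>)\<close> lies in this product iff \<open>(\<phi>, id)\<close> and \<open>(id, \<psi>)\<close> both lie in \<open>G(F)\<close>, and
  (iv) is then pure set reasoning. For strictness, take two voters and four alternatives and
  let \<open>F\<close> rotate the alternatives according to a choice between the voters' top alternatives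
  that is twisted by one step when the voters are swapped: swapping the voters together with
  a rotation is a symmetry, swapping alone is not. None of the hypotheses on \<open>h\<close>, \<open>n\<close> and
  \<open>F\<close> is needed.\<close>

lemma (in group) subgroup_set_mult_of_commuting:
  assumes H: "subgroup H G" and K: "subgroup K G"
    and comm: "\<And>x y. x \<in> H \<Longrightarrow> y \<in> K \<Longrightarrow> x \<otimes> y = y \<otimes> x"
  shows "subgroup (H <#> K) G"
proof (rule subgroupI)
  show "H <#> K \<subseteq> carrier G"
    by (simp add: setmult_subset_G H K subgroup.subset)
  have "\<one> \<otimes> \<one> \<in> H <#> K"
    unfolding set_mult_def using H K subgroup.one_closed by blast
  then show "H <#> K \<noteq> {}" by blast
next
  fix x assume "x \<in> H <#> K"
  then obtain h k where h: "h \<in> H" and k: "k \<in> K" and x: "x = h \<otimes> k"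
    unfolding set_mult_def by blast
  have "inv x = inv k \<otimes> inv h"
    using x subgroup.mem_carrier[OF H h] subgroup.mem_carrier[OF K k] by (simp add: inv_mult_group)
  also have "\<dots> = inv h \<otimes> inv k"
    by (rule comm[OF subgroup.m_inv_closed[OF H h] subgroup.m_inv_closed[OF K k], symmetric])
  finally show "inv x \<in> H <#> K"
    unfolding set_mult_def using subgroup.m_inv_closed[OF H h] subgroup.m_inv_closed[OF K k] by blast
next
  fix x y assume "x \<in> H <#> K" "y \<in> H <#> K"
  then obtain h1 k1 h2 k2 where h1: "h1 \<in> H" and k1: "k1 \<in> K" and x: "x = h1 \<otimes> k1"
      and h2: "h2 \<in> H" and k2: "k2 \<in> K" and y: "y = h2 \<otimes> k2"
    unfolding set_mult_def by blast
  note carr = subgroup.mem_carrier[OF H h1] subgroup.mem_carrier[OF K k1]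
    subgroup.mem_carrier[OF H h2] subgroup.mem_carrier[OF K k2]
  have "x \<otimes> y = h1 \<otimes> (k1 \<otimes> h2) \<otimes> k2"
    using x y carr by (simp add: m_assoc)
  also have "\<dots> = h1 \<otimes> (h2 \<otimes> k1) \<otimes> k2"
    by (simp only: comm[OF h2 k1])
  also have "\<dots> = (h1 \<otimes> h2) \<otimes> (k1 \<otimes> k2)"
    using carr by (simp add: m_assoc)
  finally show "x \<otimes> y \<in> H <#> K"
    unfolding set_mult_def using subgroup.m_closed[OF H h1 h2] subgroup.m_closed[OF K k1 k2] by blast
qed

lemma (in group) generate_Un_eq_set_mult_of_commuting:
  assumes H: "subgroup H G" and K: "subgroup K G"
    and comm: "\<And>x y. x \<in> H \<Longrightarrow> y \<in> K \<Longrightarrow> x \<otimes> y = y \<otimes> x"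
  shows "generate G (H \<union> K) = H <#> K"
proof
  have "H \<union> K \<subseteq> H <#> K"
  proof -
    have "x \<otimes> \<one> \<in> H <#> K" if "x \<in> H" for x
      unfolding set_mult_def using that K subgroup.one_closed by blast
    moreover have "\<one> \<otimes> y \<in> H <#> K" if "y \<in> K" for y
      unfolding set_mult_def using that H subgroup.one_closed by blast
    ultimately show ?thesis
      using H K by (auto simp: subgroup.mem_carrier)
  qed
  then show "generate G (H \<union> K) \<subseteq> H <#> K"
    by (rule generate_subgroup_incl[OF _ subgroup_set_mult_of_commuting[OF H K comm]])
next
  show "H <#> K \<subseteq> generate G (H \<union> K)"
  proof
    fix x assume "x \<in> H <#> K"
    then obtain h k where "h \<in> H" "k \<in> K" "x = h \<otimes> k"
      unfolding set_mult_def by blast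
    then show "x \<in> generate G (H \<union> K)"
      by (simp add: generate.eng generate.incl)
  qed
qed

lemma set_eq_Times_fst_snd_iff:
  assumes "(a, b) \<in> S"
  shows "S = {(x, y). (x, b) \<in> S \<and> (a, y) \<in> S} \<longleftrightarrow> S = fst ` S \<times> snd ` S"
proof
  assume S: "S = {(x, y). (x, b) \<in> S \<and> (a, y) \<in> S}"
  have mem: "(x, y) \<in> S \<longleftrightarrow> (x, b) \<in> S \<and> (a, y) \<in> S" for x y
    using S[unfolded set_eq_iff, rule_format, of "(x, y)"] by simp
  have "(x, y) \<in> S" if "(x, y') \<in> S" "(x', y) \<in> S" for x y x' y'
    using that mem by blast
  then show "S = fst ` S \<times> snd ` S"
    by force
next
  assume S: "S = fst ` S \<times> snd ` S"
  have mem: "(x, y) \<in> S \<longleftrightarrow> x \<in> fst ` S \<and> y \<in> snd ` S" for x y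
    using S[unfolded set_eq_iff, rule_format, of "(x, y)"] by simp
  have "a \<in> fst ` S" "b \<in> snd ` S"
    using assms by force+
  then show "S = {(x, y). (x, b) \<in> S \<and> (a, y) \<in> S}"
    using mem by auto
qed

lemma group_GG: "group (GG h n)"
  unfolding GG_def by (intro DirProd_group sym_group_is_group)

lemma carrier_GG: "carrier (GG h n) = {a. a permutes {1..h}} \<times> {b. b permutes {1..n}}"
  unfolding GG_def by (simp add: sym_group_def)

lemma mult_GG [simp]: "(a, b) \<otimes>\<^bsub>GG h n\<^esub> (c, d) = (a \<circ> c, b \<circ> d)"
  unfolding GG_def by (simp add: sym_group_def)

lemma inv_GG: "(a, b) \<in> carrier (GG h n) \<Longrightarrow> inv\<^bsub>GG h n\<^esub> (a, b) = (inv' a, inv' b)"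
  unfolding GG_def by (subst inv_DirProd) (auto simp: sym_group_is_group)

lemma subgroup_GG_fst_factor: "subgroup (carrier (sym_group h) \<times> {id}) (GG h n)"
  using DirProd_subgroups[OF sym_group_is_group group.subgroup_self[OF sym_group_is_group]
      sym_group_is_group group.triv_subgroup[OF sym_group_is_group]]
  by (simp add: GG_def sym_group_one)

lemma subgroup_GG_snd_factor: "subgroup ({id} \<times> carrier (sym_group n)) (GG h n)"
  using DirProd_subgroups[OF sym_group_is_group group.triv_subgroup[OF sym_group_is_group]
      sym_group_is_group group.subgroup_self[OF sym_group_is_group]]
  by (simp add: GG_def sym_group_one)

lemma act_in_profiles:
  assumes a: "a permutes {1..h}" and b: "b permutes {1..n}" and p: "p \<in> profiles h n"
  shows "act h (a, b) p \<in> profiles h n"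
proof -
  have "p (inv' a i) permutes {1..n}" if "i \<in> {1..h}" for i
    using p permutes_in_image[OF permutes_inv[OF a]] that
    by (auto simp: profiles_def sym_group_def)
  then show ?thesis
    using b by (auto simp: act_def profiles_def sym_group_def intro: permutes_compose)
qed

lemma act_id:
  assumes "p \<in> profiles h n"
  shows "act h (id, id) p = p"
  using assms by (auto simp: act_def profiles_def PiE_def extensional_def)

lemma act_comp:
  assumes a1: "a1 permutes {1..h}" and a2: "a2 permutes {1..h}"
  shows "act h (a1 \<circ> a2, b1 \<circ> b2) p = act h (a1, b1) (act h (a2, b2) p)"
proof
  fix i
  have "inv' (a1 \<circ> a2) = inv' a2 \<circ> inv' a1"
    using a1 a2 by (simp add: o_inv_distrib permutes_bij)
  moreover have "inv' a1 i \<in> {1..h}" if "i \<in> {1..h}"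
    using that permutes_in_image[OF permutes_inv[OF a1]] by simp
  ultimately show "act h (a1 \<circ> a2, b1 \<circ> b2) p i = act h (a1, b1) (act h (a2, b2) p) i"
    by (cases "i \<in> {1..h}") (simp_all add: act_def o_assoc del: atLeastAtMost_iff)
qed

context
  fixes F :: "(nat \<Rightarrow> nat \<Rightarrow> nat) \<Rightarrow> nat \<Rightarrow> nat"
begin

lemma symG_iff: "(a, b) \<in> symG h n F \<longleftrightarrow> a permutes {1..h} \<and> b permutes {1..n} \<and>
    (\<forall>p\<in>profiles h n. F (act h (a, b) p) = b \<circ> F p)"
  by (simp add: symG_def carrier_GG)

lemma id_in_symG: "(id, id) \<in> symG h n F"
  by (simp add: symG_iff permutes_id act_id)

lemma comp_in_symG:
  assumes g1: "(a1, b1) \<in> symG h n F" and g2: "(a2, b2) \<in> symG h n F"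
  shows "(a1 \<circ> a2, b1 \<circ> b2) \<in> symG h n F"
proof -
  have a1: "a1 permutes {1..h}" and b1: "b1 permutes {1..n}"
    and F1: "\<forall>q\<in>profiles h n. F (act h (a1, b1) q) = b1 \<circ> F q"
    using g1 unfolding symG_iff by blast+
  have a2: "a2 permutes {1..h}" and b2: "b2 permutes {1..n}"
    and F2: "\<forall>q\<in>profiles h n. F (act h (a2, b2) q) = b2 \<circ> F q"
    using g2 unfolding symG_iff by blast+
  have "F (act h (a1 \<circ> a2, b1 \<circ> b2) p) = (b1 \<circ> b2) \<circ> F p" if p: "p \<in> profiles h n" for p
  proof -
    have "F (act h (a1 \<circ> a2, b1 \<circ> b2) p) = F (act h (a1, b1) (act h (a2, b2) p))"
      by (simp only: act_comp[OF a1 a2])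
    also have "\<dots> = b1 \<circ> F (act h (a2, b2) p)"
      using F1 act_in_profiles[OF a2 b2 p] by blast
    also have "\<dots> = b1 \<circ> (b2 \<circ> F p)"
      using F2 p by simp
    finally show ?thesis
      by (simp only: o_assoc)
  qed
  then show ?thesis
    using a1 a2 b1 b2 by (simp add: symG_iff permutes_compose)
qed

lemma inv_in_symG:
  assumes g: "(a, b) \<in> symG h n F"
  shows "(inv' a, inv' b) \<in> symG h n F"
proof -
  have a: "a permutes {1..h}" and b: "b permutes {1..n}"
    and Fg: "\<forall>q\<in>profiles h n. F (act h (a, b) q) = b \<circ> F q"
    using g unfolding symG_iff by blast+
  have "F (act h (inv' a, inv' b) p) = inv' b \<circ> F p" if p: "p \<in> profiles h n" for p
  proof -
    define q where "q = act h (inv' a, inv' b) p"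
    have q: "q \<in> profiles h n"
      unfolding q_def using act_in_profiles[OF permutes_inv[OF a] permutes_inv[OF b] p] .
    have "act h (a, b) q = act h (a \<circ> inv' a, b \<circ> inv' b) p"
      unfolding q_def by (rule act_comp[OF a permutes_inv[OF a], symmetric])
    also have "\<dots> = p"
      using act_id[OF p] by (simp only: permutes_inv_o[OF a] permutes_inv_o[OF b])
    finally have "F p = b \<circ> F q"
      using Fg q by metis
    then have "inv' b \<circ> F p = F q"
      using permutes_inv_o(2)[OF b] by (simp add: o_assoc)
    then show ?thesis
      by (simp add: q_def)
  qed
  then show ?thesis
    using a b by (simp add: symG_iff permutes_inv)
qed

lemma subgroup_symG: "subgroup (symG h n F) (GG h n)"
proof (rule group.subgroupI[OF group_GG])
  show carrier: "symG h n F \<subseteq> carrier (GG h n)"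
    by (auto simp: symG_def)
  show "symG h n F \<noteq> {}"
    using id_in_symG by blast
  show "inv\<^bsub>GG h n\<^esub> g \<in> symG h n F" if g: "g \<in> symG h n F" for g
  proof (cases g)
    case (Pair a b)
    then have "inv\<^bsub>GG h n\<^esub> g = (inv' a, inv' b)"
      using g carrier inv_GG by blast
    then show ?thesis
      using g Pair inv_in_symG by simp
  qed
  show "g1 \<otimes>\<^bsub>GG h n\<^esub> g2 \<in> symG h n F" if "g1 \<in> symG h n F" "g2 \<in> symG h n F" for g1 g2
    using that comp_in_symG by (cases g1, cases g2) simp
qed

lemma anonG_eq_symG_Int: "anonG h n F = symG h n F \<inter> (carrier (sym_group h) \<times> {id})"
  by (auto simp: anonG_def symG_def GG_def)

lemma neutG_eq_symG_Int: "neutG h n F = symG h n F \<inter> ({id} \<times> carrier (sym_group n))"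
  by (auto simp: neutG_def symG_def GG_def)

lemma subgroup_anonG: "subgroup (anonG h n F) (GG h n)"
  using group.subgroups_Inter_pair[OF group_GG subgroup_symG subgroup_GG_fst_factor]
  by (simp add: anonG_eq_symG_Int)

lemma subgroup_neutG: "subgroup (neutG h n F) (GG h n)"
  using group.subgroups_Inter_pair[OF group_GG subgroup_symG subgroup_GG_snd_factor]
  by (simp add: neutG_eq_symG_Int)

lemma anonG_neutG_commute:
  "x \<in> anonG h n F \<Longrightarrow> y \<in> neutG h n F \<Longrightarrow> x \<otimes>\<^bsub>GG h n\<^esub> y = y \<otimes>\<^bsub>GG h n\<^esub> x"
  by (auto simp: anonG_eq_symG_Int neutG_eq_symG_Int)

lemma set_mult_anonG_neutG: "anonG h n F <#>\<^bsub>GG h n\<^esub> neutG h n F =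
    {(\<phi>, \<psi>). (\<phi>, id) \<in> symG h n F \<and> (id, \<psi>) \<in> symG h n F}"
proof (intro equalityI subsetI)
  fix g assume "g \<in> anonG h n F <#>\<^bsub>GG h n\<^esub> neutG h n F"
  then obtain \<phi> \<psi> where "(\<phi>, id) \<in> anonG h n F" "(id, \<psi>) \<in> neutG h n F" "g = (\<phi>, \<psi>)"
    unfolding set_mult_def by (auto simp: anonG_def neutG_def)
  then show "g \<in> {(\<phi>, \<psi>). (\<phi>, id) \<in> symG h n F \<and> (id, \<psi>) \<in> symG h n F}"
    by (auto simp: anonG_def neutG_def symG_def)
next
  fix g assume "g \<in> {(\<phi>, \<psi>). (\<phi>, id) \<in> symG h n F \<and> (id, \<psi>) \<in> symG h n F}"
  then obtain \<phi> \<psi> where "(\<phi>, id) \<in> anonG h n F" "(id, \<psi>) \<in> neutG h n F" "g = (\<phi>, id) \<otimes>\<^bsub>GG h n\<^esub> (id, \<psi>)"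
    by (auto simp: anonG_def neutG_def symG_def)
  then show "g \<in> anonG h n F <#>\<^bsub>GG h n\<^esub> neutG h n F"
    unfolding set_mult_def by blast
qed

lemma set_mult_anonG_neutG_subset_symG:
  "anonG h n F <#>\<^bsub>GG h n\<^esub> neutG h n F \<subseteq> symG h n F"
  unfolding set_mult_anonG_neutG using comp_in_symG by fastforce

end

definition rotation :: "nat \<Rightarrow> nat \<Rightarrow> nat" where
  "rotation k i = (if i \<in> {1..4} then (i - 1 + k) mod 4 + 1 else i)"

lemma rotation_in: "i \<in> {1..4} \<Longrightarrow> rotation k i \<in> {1..4}"
  by (simp add: rotation_def)

lemma rotation_comp: "rotation k \<circ> rotation l = rotation (k + l)"
proof
  fix i
  show "(rotation k \<circ> rotation l) i = rotation (k + l) i"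
  proof (cases "i \<in> {1..4}")
    case True
    have "((i - 1 + l) mod 4 + k) mod 4 = (i - 1 + (k + l)) mod 4"
      by presburger
    then show ?thesis
      using True by (simp add: rotation_def)
  next
    case False
    then show ?thesis
      by (simp add: rotation_def del: atLeastAtMost_iff)
  qed
qed

lemma rotation_mod: "rotation (k mod 4) = rotation k"
proof
  fix i
  show "rotation (k mod 4) i = rotation k i"
    unfolding rotation_def by presburger
qed

lemma rotation_0: "rotation 0 = id"
  by (auto simp: fun_eq_iff rotation_def)

lemma rotation_eq_id: "k mod 4 = 0 \<Longrightarrow> rotation k = id"
  by (metis rotation_mod rotation_0)

lemma rotation_permutes: "rotation k permutes {1..4}"
proof (rule bij_imp_permutes)
  have "(k + (4 - k mod 4)) mod 4 = 0" "(4 - k mod 4 + k) mod 4 = 0"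
    by presburger+
  then have "rotation k \<circ> rotation (4 - k mod 4) = id" "rotation (4 - k mod 4) \<circ> rotation k = id"
    by (simp_all only: rotation_comp rotation_eq_id)
  then have "rotation k (rotation (4 - k mod 4) i) = i" "rotation (4 - k mod 4) (rotation k i) = i"
    for i by (simp_all add: pointfree_idE)
  moreover have "rotation j ` {1..4} \<subseteq> {1..4}" for j
    using rotation_in by blast
  ultimately show "bij_betw (rotation k) {1..4} {1..4}"
    by (intro bij_betw_byWitness[where f' = "rotation (4 - k mod 4)"]) simp_all
  show "rotation k x = x" if "x \<notin> {1..4}" for x
    using that by (simp add: rotation_def del: atLeastAtMost_iff)
qed

text \<open>Reading an alternative \<open>i \<in> {1..4}\<close> as the residue \<open>i - 1\<close> mod 4, \<open>twisted_choice x y\<close> is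
  \<open>x\<close> or \<open>y\<close>, chosen so that \<open>twisted_choice (y + 1) (x + 1) = twisted_choice x y + 1\<close>. Fewer
  alternatives cannot work: if \<open>\<psi>\<close> has odd order \<open>k\<close>, then \<open>(swap, \<psi>)\<^sup>k = (swap, id)\<close>; if \<open>\<psi>\<close> is an
  involution, a profile fixed by \<open>(swap, \<psi>)\<close> would force \<open>F p = \<psi> \<circ> F p\<close>.\<close>
definition twisted_choice :: "nat \<Rightarrow> nat \<Rightarrow> nat" where
  "twisted_choice x y = (let a = x - 1; b = y - 1; d = (a + 4 - b) mod 4 in
     if d = 0 \<or> d = 1 then a else if d = 3 then b else if even a then a else b)"

definition twisted_spf :: "(nat \<Rightarrow> nat \<Rightarrow> nat) \<Rightarrow> nat \<Rightarrow> nat" where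
  "twisted_spf p = rotation (twisted_choice (p 1 1) (p 2 1))"

lemma twisted_choice_swap:
  assumes "x \<in> {1..4}" "y \<in> {1..4}"
  shows "twisted_choice (rotation 1 y) (rotation 1 x) mod 4 = (twisted_choice x y + 1) mod 4"
proof -
  have "x = 1 \<or> x = 2 \<or> x = 3 \<or> x = 4" "y = 1 \<or> y = 2 \<or> y = 3 \<or> y = 4"
    using assms by auto
  then show ?thesis
    by (elim disjE) (simp_all add: rotation_def twisted_choice_def Let_def)
qed

lemma spf_twisted_spf: "spf 2 4 twisted_spf"
  using rotation_permutes by (auto simp: spf_def twisted_spf_def sym_group_def)

lemma swap_rotation_in_symG: "(transpose 1 2, rotation 1) \<in> symG 2 4 twisted_spf"
proof -
  have "twisted_spf (act 2 (transpose 1 2, rotation 1) p) = rotation 1 \<circ> twisted_spf p"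
    if p: "p \<in> profiles 2 4" for p
  proof -
    have "p 1 permutes {1..4}" "p 2 permutes {1..4}"
      using p by (auto simp: profiles_def sym_group_def)
    then have "p 1 1 \<in> {1..4}" "p 2 1 \<in> {1..4}"
      by (simp_all only: permutes_in_image) auto
    then have "twisted_choice (rotation 1 (p 2 1)) (rotation 1 (p 1 1)) mod 4 =
        (twisted_choice (p 1 1) (p 2 1) + 1) mod 4"
      by (rule twisted_choice_swap)
    then have "rotation (twisted_choice (rotation 1 (p 2 1)) (rotation 1 (p 1 1))) =
        rotation (twisted_choice (p 1 1) (p 2 1) + 1)"
      by (metis rotation_mod)
    then show ?thesis
      by (simp add: twisted_spf_def act_def inv_transpose_eq rotation_comp add.commute)
  qed
  then show ?thesis
    using rotation_permutes by (simp add: symG_iff permutes_swap_id)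
qed

lemma swap_notin_symG: "(transpose 1 2, id) \<notin> symG 2 4 twisted_spf"
proof
  \<comment> \<open>Opposite top alternatives: there the choice goes by parity, not by the order of the voters.\<close>
  define p :: "nat \<Rightarrow> nat \<Rightarrow> nat" where "p = (\<lambda>i\<in>{1..2}. if i = 1 then id else rotation 2)"
  have "p \<in> profiles 2 4"
    using rotation_permutes by (auto simp: p_def profiles_def sym_group_def permutes_id)
  moreover have "twisted_spf (act 2 (transpose 1 2, id) p) 1 \<noteq> twisted_spf p 1"
    by (simp add: p_def act_def inv_transpose_eq twisted_spf_def twisted_choice_def rotation_def)
  moreover assume "(transpose 1 2, id) \<in> symG 2 4 twisted_spf"
  ultimately show False
    by (auto simp: symG_iff)
qed

lemma set_mult_anonG_neutG_psubset_twisted_spf: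
  "anonG 2 4 twisted_spf <#>\<^bsub>GG 2 4\<^esub> neutG 2 4 twisted_spf \<subset> symG 2 4 twisted_spf"
proof -
  have "(transpose 1 2, rotation 1) \<notin> anonG 2 4 twisted_spf <#>\<^bsub>GG 2 4\<^esub> neutG 2 4 twisted_spf"
    using swap_notin_symG by (simp add: set_mult_anonG_neutG)
  then show ?thesis
    using set_mult_anonG_neutG_subset_symG swap_rotation_in_symG by blast
qed

theorem mainTheorem13:
  fixes h n :: nat and F :: "(nat \<Rightarrow> (nat \<Rightarrow> nat)) \<Rightarrow> (nat \<Rightarrow> nat)"
  assumes "2 \<le> h" and "2 \<le> n" and "spf h n F"
  shows "subgroup (symG h n F) (GG h n)
    \<and> subgroup (anonG h n F) ((GG h n)\<lparr>carrier := symG h n F\<rparr>)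
    \<and> subgroup (neutG h n F) ((GG h n)\<lparr>carrier := symG h n F\<rparr>)
    \<and> anonG h n F \<subseteq> carrier (sym_group h) \<times> {id}
    \<and> neutG h n F \<subseteq> {id} \<times> carrier (sym_group n)
    \<and> generate (GG h n) (anonG h n F \<union> neutG h n F) = anonG h n F <#>\<^bsub>GG h n\<^esub> neutG h n F
    \<and> anonG h n F <#>\<^bsub>GG h n\<^esub> neutG h n F \<subseteq> symG h n F
    \<and> (\<exists>h' n' F'. 2 \<le> h' \<and> 2 \<le> n' \<and> spf h' n' F' \<and>
         anonG h' n' F' <#>\<^bsub>GG h' n'\<^esub> neutG h' n' F' \<subset> symG h' n' F')
    \<and> (symG h n F = anonG h n F <#>\<^bsub>GG h n\<^esub> neutG h n F
        \<longleftrightarrow> symG h n F = fst ` symG h n F \<times> snd ` symG h n F)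
    \<and> (symG h n F \<subseteq> carrier (sym_group h) \<times> {id} \<longrightarrow> symG h n F = anonG h n F)
    \<and> (symG h n F \<subseteq> {id} \<times> carrier (sym_group n) \<longrightarrow> symG h n F = neutG h n F)"
proof (intro conjI)
  interpret GG: group "GG h n" by (rule group_GG)
  have anonG_sub: "anonG h n F \<subseteq> symG h n F" and neutG_sub: "neutG h n F \<subseteq> symG h n F"
    by (auto simp: anonG_eq_symG_Int neutG_eq_symG_Int)
  show "subgroup (symG h n F) (GG h n)"
    by (rule subgroup_symG)
  show "subgroup (anonG h n F) ((GG h n)\<lparr>carrier := symG h n F\<rparr>)"
    by (rule GG.subgroup_incl[OF subgroup_anonG subgroup_symG anonG_sub])
  show "subgroup (neutG h n F) ((GG h n)\<lparr>carrier := symG h n F\<rparr>)"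
    by (rule GG.subgroup_incl[OF subgroup_neutG subgroup_symG neutG_sub])
  show "anonG h n F \<subseteq> carrier (sym_group h) \<times> {id}"
    and "neutG h n F \<subseteq> {id} \<times> carrier (sym_group n)"
    by (auto simp: anonG_eq_symG_Int neutG_eq_symG_Int)
  show "generate (GG h n) (anonG h n F \<union> neutG h n F) = anonG h n F <#>\<^bsub>GG h n\<^esub> neutG h n F"
    by (rule GG.generate_Un_eq_set_mult_of_commuting[OF subgroup_anonG subgroup_neutG
          anonG_neutG_commute])
  show "anonG h n F <#>\<^bsub>GG h n\<^esub> neutG h n F \<subseteq> symG h n F"
    by (rule set_mult_anonG_neutG_subset_symG)
  show "\<exists>h' n' F'. 2 \<le> h' \<and> 2 \<le> n' \<and> spf h' n' F' \<and>
      anonG h' n' F' <#>\<^bsub>GG h' n'\<^esub> neutG h' n' F' \<subset> symG h' n' F'"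
    by (intro exI[of _ 2] exI[of _ 4] exI[of _ twisted_spf] conjI order_refl spf_twisted_spf
        set_mult_anonG_neutG_psubset_twisted_spf) simp
  show "symG h n F = anonG h n F <#>\<^bsub>GG h n\<^esub> neutG h n F
      \<longleftrightarrow> symG h n F = fst ` symG h n F \<times> snd ` symG h n F"
    unfolding set_mult_anonG_neutG by (rule set_eq_Times_fst_snd_iff[OF id_in_symG])
  show "symG h n F \<subseteq> carrier (sym_group h) \<times> {id} \<longrightarrow> symG h n F = anonG h n F"
    and "symG h n F \<subseteq> {id} \<times> carrier (sym_group n) \<longrightarrow> symG h n F = neutG h n F"
    by (auto simp: anonG_eq_symG_Int neutG_eq_symG_Int)
qed

end
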